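(* Let $A\subseteq B\subseteq\mathbb{N}$. If $B\in\mathcal{D}$, then there exists $C\in\mathcal{D}$ such that $d(C)=\overline{\overline{d}}(A)$ and $A\subseteq C\subseteq B$. If $A\in\mathcal{D}$, then there exists $C\in\mathcal{D}$ such that $d(C)=\underline{\underline{d}}(B)$ and $A\subseteq C\subseteq B$.
   Context: $\mathbb{N}=\{1,2,3,\dots\}$. For $A\subseteq\mathbb{N}$ let $A(n)=|A\cap[1,n]|$. Let $\mathcal{D}$ be the collection of all $A\subseteq\mathbb{N}$ for which the asymptotic density $d(A)=\lim_{n\to\infty}\frac{A(n)}{n}$ exists. Define $\underline{\underline{d}}(A)=\sup\{d(B);\ B\subseteq A,\ B\in\mathcal{D}\}$ and $\overline{\overline{d}}(A)=\inf\{d(C);\ C\supseteq A,\ C\in\mathcal{D}\}$. *)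

theory Defs
  imports "HOL-Analysis.Analysis"
begin

definition cnt :: "nat set \<Rightarrow> nat \<Rightarrow> nat" where
  "cnt A n = card (A \<inter> {1..n})"

definition has_density :: "nat set \<Rightarrow> real \<Rightarrow> bool" where
  "has_density A \<delta> \<longleftrightarrow> ((\<lambda>n. real (cnt A n) / real n) \<longlongrightarrow> \<delta>) sequentially"

definition Dens :: "nat set set" where
  "Dens = {A. A \<subseteq> {1..} \<and> (\<exists>\<delta>. has_density A \<delta>)}"

definition dens :: "nat set \<Rightarrow> real" where
  "dens A = lim (\<lambda>n. real (cnt A n) / real n)"

definition lower_dd :: "nat set \<Rightarrow> real" where
  "lower_dd A = Sup {dens B | B. B \<subseteq> A \<and> B \<in> Dens}"

definition upper_dd :: "nat set \<Rightarrow> real" where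
  "upper_dd A = Inf {dens C | C. A \<subseteq> C \<and> C \<in> Dens}"

end

theory Submission
  imports Defs
begin

text \<open>If \<open>A \<subseteq> C\<close> and \<open>A \<subseteq> Y\<close> with \<open>d(C) \<le> d(Y)\<close>, walk through \<open>Y\<close> and keep an
  element whenever it lies in \<open>C\<close> or the count of kept elements lags behind that of \<open>C\<close>:
  the kept set lies between \<open>A\<close> and \<open>Y\<close> and has density \<open>d(C)\<close>. Iterating this inside \<open>B\<close>
  against supersets of \<open>A\<close> whose densities approach \<open>u = upper_dd A\<close> gives a decreasing chain
  \<open>B \<supseteq> Y\<^sub>0 \<supseteq> Y\<^sub>1 \<supseteq> \<dots> \<supseteq> A\<close> with \<open>d(Y\<^sub>k) \<rightarrow> u\<close>. Choose thresholds \<open>N\<^sub>k \<ge> k\<close> beyond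
  which the counting ratio of \<open>Y\<^sub>k\<close> is within \<open>1/(k+1)\<close> of \<open>d(Y\<^sub>k)\<close>; the diagonal set of those
  \<open>x \<in> Y\<^sub>0\<close> with \<open>x \<in> Y\<^sub>j\<close> whenever \<open>N\<^sub>j \<le> x\<close> contains \<open>A\<close>; on \<open>[1,n]\<close> it contains \<open>Y\<^sub>j\<close>
  for the largest \<open>j\<close> with \<open>N\<^sub>j \<le> n\<close> and exceeds each \<open>Y\<^sub>i\<close> by at most \<open>N\<^sub>i\<close> elements,
  so its density is exactly \<open>u\<close>. The
  statement about \<open>lower_dd B\<close> follows by passing to complements in \<open>{1..}\<close>.\<close>

lemma cnt_0 [simp]: "cnt Z 0 = 0"
  by (simp add: cnt_def)

lemma cnt_Suc: "cnt Z (Suc n) = cnt Z n + (if Suc n \<in> Z then 1 else 0)"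
proof -
  have "Z \<inter> {1..Suc n} = (if Suc n \<in> Z then insert (Suc n) (Z \<inter> {1..n}) else Z \<inter> {1..n})"
    by (auto simp: le_Suc_eq)
  then show ?thesis by (simp add: cnt_def)
qed

lemma cnt_mono: "Z \<subseteq> W \<Longrightarrow> cnt Z n \<le> cnt W n"
  unfolding cnt_def by (intro card_mono) auto

lemma cnt_le: "cnt Z n \<le> n"
  using cnt_mono[of Z UNIV n] by (simp add: cnt_def)

lemma cnt_complement: "cnt ({1..} - Z) n = n - cnt Z n"
proof -
  have "({1..} - Z) \<inter> {1..n} = {1..n} - ({1..n} \<inter> Z)" by auto
  then show ?thesis by (simp add: cnt_def card_Diff_subset Int_commute)
qed

lemma dens_eqI: "has_density Z d \<Longrightarrow> dens Z = d"
  unfolding has_density_def dens_def by (rule limI)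

lemma has_density_dens: "Z \<in> Dens \<Longrightarrow> has_density Z (dens Z)"
  unfolding Dens_def using dens_eqI by auto

lemma DensI: "Z \<subseteq> {1..} \<Longrightarrow> has_density Z d \<Longrightarrow> Z \<in> Dens"
  unfolding Dens_def by blast

lemma has_density_nonneg: "has_density Z d \<Longrightarrow> 0 \<le> d"
  unfolding has_density_def by (rule LIMSEQ_le_const) auto

lemma has_density_complement:
  assumes "has_density Z d"
  shows "has_density ({1..} - Z) (1 - d)"
proof -
  have "(\<lambda>n. 1 - real (cnt Z n) / real n) \<longlonglongrightarrow> 1 - d"
    using assms unfolding has_density_def by (intro tendsto_intros)
  moreover have "\<forall>\<^sub>F n in sequentially. 1 - real (cnt Z n) / real n = real (cnt ({1..} - Z) n) / real n"
    using eventually_gt_at_top[of "0::nat"]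
  proof eventually_elim
    case (elim n)
    then show ?case
      using cnt_le[of Z n] cnt_complement[of Z n] by (simp add: of_nat_diff diff_divide_distrib)
  qed
  ultimately show ?thesis
    unfolding has_density_def by (rule Lim_transform_eventually)
qed

lemma Dens_complement: "Z \<in> Dens \<Longrightarrow> {1..} - Z \<in> Dens"
  by (rule DensI[OF _ has_density_complement[OF has_density_dens]]) auto

lemma dens_complement: "Z \<in> Dens \<Longrightarrow> dens ({1..} - Z) = 1 - dens Z"
  by (intro dens_eqI has_density_complement has_density_dens)

lemma upper_dd_le: "A \<subseteq> C \<Longrightarrow> C \<in> Dens \<Longrightarrow> upper_dd A \<le> dens C"
  unfolding upper_dd_def
  by (rule cInf_lower) (auto simp: bdd_below_def intro: has_density_nonneg has_density_dens)

lemma upper_dd_eqI: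
  assumes "C \<in> Dens" "A \<subseteq> C" "\<And>C'. C' \<in> Dens \<Longrightarrow> A \<subseteq> C' \<Longrightarrow> dens C \<le> dens C'"
  shows "upper_dd A = dens C"
  unfolding upper_dd_def using assms by (intro cInf_eq_minimum) auto

lemma lower_dd_eqI:
  assumes "C \<in> Dens" "C \<subseteq> B" "\<And>C'. C' \<in> Dens \<Longrightarrow> C' \<subseteq> B \<Longrightarrow> dens C' \<le> dens C"
  shows "lower_dd B = dens C"
  unfolding lower_dd_def using assms by (intro cSup_eq_maximum) auto

lemma upper_dd_approx:
  assumes "A \<subseteq> B" "B \<in> Dens" "e > 0"
  obtains C where "C \<in> Dens" "A \<subseteq> C" "dens C < upper_dd A + e"
proof -
  have "Inf {dens C | C. A \<subseteq> C \<and> C \<in> Dens} < upper_dd A + e"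
    using assms(3) by (simp add: upper_dd_def)
  then show ?thesis
    using cInf_lessD[of "{dens C | C. A \<subseteq> C \<and> C \<in> Dens}"] assms(1,2) that by blast
qed

lemma vanishing_weighted_prefix_bound:
  fixes h :: "nat \<Rightarrow> real"
  assumes "h \<longlonglongrightarrow> 0" "e > 0"
  shows "\<exists>N. \<forall>n\<ge>N. \<forall>m\<le>n. real m * \<bar>h m\<bar> \<le> e * real n"
proof -
  obtain N1 where N1: "\<And>m. m \<ge> N1 \<Longrightarrow> \<bar>h m\<bar> < e"
    using LIMSEQ_D[OF assms] by auto
  define K where "K = (\<Sum>m<N1. real m * \<bar>h m\<bar>)"
  have K: "real m * \<bar>h m\<bar> \<le> K" if "m < N1" for m
    unfolding K_def by (rule member_le_sum) (use that in auto)
  define N2 where "N2 = nat \<lceil>K / e\<rceil>"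
  have "K / e \<le> real N2" unfolding N2_def by linarith
  then have KN2: "K \<le> e * real N2" using assms(2) by (simp add: field_simps)
  show ?thesis
  proof (intro exI[of _ "max N1 N2"] allI impI)
    fix n m assume n: "max N1 N2 \<le> n" and m: "m \<le> n"
    show "real m * \<bar>h m\<bar> \<le> e * real n"
    proof (cases "m \<ge> N1")
      case True
      then have "real m * \<bar>h m\<bar> \<le> real m * e" using N1[OF True] by (intro mult_left_mono) auto
      also have "\<dots> \<le> e * real n" using m assms(2) by simp
      finally show ?thesis .
    next
      case False
      then have "real m * \<bar>h m\<bar> \<le> K" using K by simp
      also have "\<dots> \<le> e * real N2" by (rule KN2)
      also have "\<dots> \<le> e * real n" using n assms(2) by (intro mult_left_mono) auto
      finally show ?thesis .
    qed
  qed
qed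

lemma prefix_bounded_over_n_tendsto_zero:
  fixes g h :: "nat \<Rightarrow> real"
  assumes "h \<longlonglongrightarrow> 0" "\<And>n. 0 \<le> g n" "\<And>n. \<exists>m\<le>n. g n \<le> real n * \<bar>h n\<bar> + real m * \<bar>h m\<bar>"
  shows "(\<lambda>n. g n / real n) \<longlonglongrightarrow> 0"
proof (rule LIMSEQ_I)
  fix r :: real assume r: "0 < r"
  obtain N where N: "\<And>n m. n \<ge> N \<Longrightarrow> m \<le> n \<Longrightarrow> real m * \<bar>h m\<bar> \<le> r / 3 * real n"
    using vanishing_weighted_prefix_bound[OF assms(1), of "r/3"] r by auto
  show "\<exists>n0. \<forall>n\<ge>n0. norm (g n / real n - 0) < r"
  proof (intro exI[of _ "Suc N"] allI impI)
    fix n assume n: "Suc N \<le> n"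
    obtain m where "m \<le> n" "g n \<le> real n * \<bar>h n\<bar> + real m * \<bar>h m\<bar>"
      using assms(3) by blast
    then have "g n \<le> 2 * (r / 3) * real n"
      using N[of n n] N[of n m] n by linarith
    also have "\<dots> < r * real n" using n r by simp
    finally show "norm (g n / real n - 0) < r"
      using assms(2)[of n] n by (simp add: field_simps)
  qed
qed

fun greedy_count :: "nat set \<Rightarrow> nat set \<Rightarrow> nat \<Rightarrow> nat" where
  "greedy_count C Y 0 = 0"
| "greedy_count C Y (Suc n) =
     (if Suc n \<in> Y \<and> (Suc n \<in> C \<or> greedy_count C Y n < cnt C n)
      then Suc (greedy_count C Y n) else greedy_count C Y n)"

definition greedy_set :: "nat set \<Rightarrow> nat set \<Rightarrow> nat set" where
  "greedy_set C Y = {k \<in> Y. k \<in> C \<or> greedy_count C Y (k - 1) < cnt C (k - 1)}"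

lemma greedy_set_subset: "greedy_set C Y \<subseteq> Y"
  by (auto simp: greedy_set_def)

lemma Int_subset_greedy_set: "C \<inter> Y \<subseteq> greedy_set C Y"
  by (auto simp: greedy_set_def)

lemma cnt_greedy_set: "cnt (greedy_set C Y) n = greedy_count C Y n"
proof (induction n)
  case (Suc n)
  have "Suc n \<in> greedy_set C Y \<longleftrightarrow> Suc n \<in> Y \<and> (Suc n \<in> C \<or> greedy_count C Y n < cnt C n)"
    by (simp add: greedy_set_def)
  then show ?case using Suc.IH by (simp add: cnt_Suc)
qed simp

text \<open>Since the last time \<open>m\<close> at which the greedy count caught up with \<open>C\<close>, every element
  of \<open>Y\<close> has been taken, so the deficit is at most the growth of \<open>cnt C - cnt Y\<close> since \<open>m\<close>.\<close>

lemma greedy_count_deficit: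
  "greedy_count C Y n \<le> cnt C n \<and> (\<exists>m\<le>n. int (cnt C n) - int (greedy_count C Y n) \<le>
      (int (cnt C n) - int (cnt Y n)) - (int (cnt C m) - int (cnt Y m)))"
proof (induction n)
  case 0 then show ?case by simp
next
  case (Suc n)
  then obtain m where m: "m \<le> n" "int (cnt C n) - int (greedy_count C Y n) \<le>
      (int (cnt C n) - int (cnt Y n)) - (int (cnt C m) - int (cnt Y m))"
    and le: "greedy_count C Y n \<le> cnt C n"
    by auto
  note steps = cnt_Suc[of C n] cnt_Suc[of Y n] greedy_count.simps(2)[of C Y n]
  show ?case
  proof (cases "Suc n \<in> Y \<and> Suc n \<notin> C \<and> \<not> greedy_count C Y n < cnt C n")
    case True
    then have "greedy_count C Y (Suc n) = cnt C (Suc n)" using le steps by simp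
    then show ?thesis by (intro conjI exI[of _ "Suc n"]) auto
  next
    case False
    have "greedy_count C Y (Suc n) \<le> cnt C (Suc n) \<and>
      int (cnt C (Suc n)) - int (greedy_count C Y (Suc n)) \<le>
      (int (cnt C (Suc n)) - int (cnt Y (Suc n))) - (int (cnt C m) - int (cnt Y m))"
      using False le m(2) steps
      by (cases "Suc n \<in> C"; cases "Suc n \<in> Y"; simp only: if_True if_False simp_thms; linarith)
    then show ?thesis using m(1) by (intro conjI exI[of _ m]) auto
  qed
qed

lemma greedy_set_has_density:
  assumes C: "has_density C c" and Y: "has_density Y y" and "c \<le> y"
  shows "has_density (greedy_set C Y) c"
proof -
  define h where "h n = real (cnt C n) / real n - real (cnt Y n) / real n - (c - y)" for n
  have h: "h \<longlonglongrightarrow> 0"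
    using tendsto_diff[OF tendsto_diff[OF C[unfolded has_density_def] Y[unfolded has_density_def]]
        tendsto_const[of "c - y"]]
    by (simp add: h_def[abs_def])
  have cnt_diff: "real (cnt C n) - real (cnt Y n) = real n * (c - y) + real n * h n" for n
    by (cases "n = 0") (auto simp: h_def field_simps)
  define g where "g n = real (cnt C n) - real (greedy_count C Y n)" for n
  have "(\<lambda>n. g n / real n) \<longlonglongrightarrow> 0"
  proof (rule prefix_bounded_over_n_tendsto_zero[OF h])
    show "0 \<le> g n" for n using greedy_count_deficit[of C Y n] by (simp add: g_def)
    show "\<exists>m\<le>n. g n \<le> real n * \<bar>h n\<bar> + real m * \<bar>h m\<bar>" for n
    proof -
      obtain m where m: "m \<le> n" "int (cnt C n) - int (greedy_count C Y n) \<le>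
          (int (cnt C n) - int (cnt Y n)) - (int (cnt C m) - int (cnt Y m))"
        using greedy_count_deficit[of C Y n] by auto
      then have "g n \<le> (real (cnt C n) - real (cnt Y n)) - (real (cnt C m) - real (cnt Y m))"
        unfolding g_def by linarith
      also have "\<dots> = (real n - real m) * (c - y) + real n * h n - real m * h m"
        by (simp add: cnt_diff algebra_simps)
      also have "\<dots> \<le> real n * \<bar>h n\<bar> + real m * \<bar>h m\<bar>"
        using m(1) \<open>c \<le> y\<close> mult_nonneg_nonpos[of "real n - real m" "c - y"]
          abs_ge_self[of "h n"] abs_ge_minus_self[of "h m"]
          mult_left_mono[of "h n" "\<bar>h n\<bar>" "real n"] mult_left_mono[of "- h m" "\<bar>h m\<bar>" "real m"]
        by simp
      finally show ?thesis using m(1) by auto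
    qed
  qed
  then have "(\<lambda>n. real (cnt C n) / real n - g n / real n) \<longlonglongrightarrow> c - 0"
    using C unfolding has_density_def by (intro tendsto_intros)
  moreover have "real (cnt C n) / real n - g n / real n = real (cnt (greedy_set C Y) n) / real n" for n
    by (simp add: g_def cnt_greedy_set diff_divide_distrib)
  ultimately show ?thesis unfolding has_density_def by simp
qed

definition diagonal_set :: "(nat \<Rightarrow> nat set) \<Rightarrow> (nat \<Rightarrow> nat) \<Rightarrow> nat set" where
  "diagonal_set Y N = {x \<in> Y 0. \<forall>j. N j \<le> x \<longrightarrow> x \<in> Y j}"

lemma INT_subset_diagonal_set: "(\<Inter>k. Y k) \<subseteq> diagonal_set Y N"
  by (auto simp: diagonal_set_def)

lemma diagonal_set_subset: "diagonal_set Y N \<subseteq> Y 0"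
  by (auto simp: diagonal_set_def)

lemma cnt_diagonal_set_le: "cnt (diagonal_set Y N) n \<le> cnt (Y i) n + N i"
proof -
  have "diagonal_set Y N \<inter> {1..n} \<subseteq> (Y i \<inter> {1..n}) \<union> {..<N i}"
    by (auto simp: diagonal_set_def)
  then have "card (diagonal_set Y N \<inter> {1..n}) \<le> card ((Y i \<inter> {1..n}) \<union> {..<N i})"
    by (intro card_mono) auto
  also have "\<dots> \<le> card (Y i \<inter> {1..n}) + card {..<N i}"
    by (rule card_Un_le)
  finally show ?thesis by (simp add: cnt_def)
qed

lemma cnt_diagonal_set_ge:
  assumes "decseq Y" and top: "\<And>j'. N j' \<le> n \<Longrightarrow> j' \<le> j"
  shows "cnt (Y j) n \<le> cnt (diagonal_set Y N) n"
proof -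
  have "Y j \<inter> {1..n} \<subseteq> diagonal_set Y N \<inter> {1..n}"
  proof
    fix x assume x: "x \<in> Y j \<inter> {1..n}"
    have "x \<in> Y j'" if "N j' \<le> x" for j'
      using x decseqD[OF assms(1) top[of j']] that by auto
    then show "x \<in> diagonal_set Y N \<inter> {1..n}"
      using x decseqD[OF assms(1), of 0 j] by (auto simp: diagonal_set_def)
  qed
  then show ?thesis unfolding cnt_def by (intro card_mono) auto
qed

lemma diagonal_set_density_eventually_gt:
  assumes dec: "decseq Y" and N_ge: "\<And>k. k \<le> N k"
    and close: "\<And>k n. N k \<le> n \<Longrightarrow> \<bar>real (cnt (Y k) n) / real n - d k\<bar> < inverse (real (Suc k))"
    and lim: "d \<longlonglongrightarrow> u" and "v < u"
  shows "\<forall>\<^sub>F n in sequentially. v < real (cnt (diagonal_set Y N) n) / real n"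
proof -
  define top where "top n = Max {j. N j \<le> n}" for n
  have top: "N (top n) \<le> n" "\<And>j. N j \<le> n \<Longrightarrow> j \<le> top n" if "N 0 \<le> n" for n
  proof -
    have "finite {j. N j \<le> n}"
      by (rule finite_subset[of _ "{..n}"]) (auto intro: le_trans[OF N_ge])
    then show "N (top n) \<le> n" "\<And>j. N j \<le> n \<Longrightarrow> j \<le> top n"
      using Max_in[of "{j. N j \<le> n}"] that unfolding top_def by auto
  qed
  have "filterlim top at_top sequentially"
    unfolding filterlim_at_top eventually_sequentially
  proof
    fix J show "\<exists>n0. \<forall>n\<ge>n0. J \<le> top n"
      using top by (intro exI[of _ "max (N 0) (N J)"]) auto
  qed
  moreover have "(\<lambda>j. d j - inverse (real (Suc j))) \<longlonglongrightarrow> u"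
    using tendsto_diff[OF lim LIMSEQ_inverse_real_of_nat] by simp
  ultimately have "\<forall>\<^sub>F n in sequentially. v < d (top n) - inverse (real (Suc (top n)))"
    using order_tendstoD(1)[OF filterlim_compose \<open>v < u\<close>] by blast
  with eventually_ge_at_top[of "N 0"]
  show ?thesis
  proof eventually_elim
    case (elim n)
    have "d (top n) - inverse (real (Suc (top n))) < real (cnt (Y (top n)) n) / real n"
      using close[OF top(1)[OF elim(1)]] by (simp add: abs_less_iff)
    also have "\<dots> \<le> real (cnt (diagonal_set Y N) n) / real n"
      using cnt_diagonal_set_ge[OF dec top(2)[OF elim(1)]] by (simp add: divide_right_mono)
    finally show ?case
      using elim(2) by simp
  qed
qed

lemma diagonal_set_density_eventually_lt:
  assumes close: "\<And>k n. N k \<le> n \<Longrightarrow> \<bar>real (cnt (Y k) n) / real n - d k\<bar> < inverse (real (Suc k))"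
    and lim: "d \<longlonglongrightarrow> u" and "u < v"
  shows "\<forall>\<^sub>F n in sequentially. real (cnt (diagonal_set Y N) n) / real n < v"
proof -
  have lim_plus: "(\<lambda>j. d j + inverse (real (Suc j))) \<longlonglongrightarrow> u"
    using tendsto_add[OF lim LIMSEQ_inverse_real_of_nat] by simp
  have "\<forall>\<^sub>F j in sequentially. d j + inverse (real (Suc j)) < u + (v - u) / 2"
    using order_tendstoD(2)[OF lim_plus, of "u + (v - u) / 2"] \<open>u < v\<close> by simp
  then obtain J where J: "d J + inverse (real (Suc J)) < u + (v - u) / 2"
    by (auto simp: eventually_sequentially)
  have "\<forall>\<^sub>F n in sequentially. real (N J) / real n < (v - u) / 2"
    by (rule order_tendstoD(2)[OF lim_const_over_n]) (use \<open>u < v\<close> in simp)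
  with eventually_ge_at_top[of "N J"]
  show ?thesis
  proof eventually_elim
    case (elim n)
    have "real (cnt (diagonal_set Y N) n) \<le> real (cnt (Y J) n) + real (N J)"
      using cnt_diagonal_set_le[of Y N n J] by linarith
    then have "real (cnt (diagonal_set Y N) n) / real n \<le> real (cnt (Y J) n) / real n + real (N J) / real n"
      unfolding add_divide_distrib[symmetric] by (rule divide_right_mono) simp
    also have "\<dots> < (d J + inverse (real (Suc J))) + (v - u) / 2"
      by (rule add_strict_mono) (use close[OF elim(1)] elim(2) in \<open>auto simp: abs_less_iff\<close>)
    also have "\<dots> < v"
      using J by argo
    finally show ?case .
  qed
qed

lemma has_density_diagonal_set:
  assumes "decseq Y" "\<And>k. k \<le> N k"
    and "\<And>k n. N k \<le> n \<Longrightarrow> \<bar>real (cnt (Y k) n) / real n - d k\<bar> < inverse (real (Suc k))"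
    and "d \<longlonglongrightarrow> u"
  shows "has_density (diagonal_set Y N) u"
  unfolding has_density_def
  by (rule order_tendstoI[OF diagonal_set_density_eventually_gt[OF assms]
        diagonal_set_density_eventually_lt[OF assms(3,4)]])

lemma exists_diagonal_set_has_density:
  assumes "decseq Y" "\<And>k. has_density (Y k) (d k)" "d \<longlonglongrightarrow> u"
  obtains N where "has_density (diagonal_set Y N) u"
proof -
  have "\<exists>M. \<forall>n\<ge>M. \<bar>real (cnt (Y k) n) / real n - d k\<bar> < inverse (real (Suc k))" for k
    using LIMSEQ_D[OF assms(2)[of k, unfolded has_density_def], of "inverse (real (Suc k))"]
    by simp
  then obtain M where M: "\<And>k n. M k \<le> n \<Longrightarrow> \<bar>real (cnt (Y k) n) / real n - d k\<bar> < inverse (real (Suc k))"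
    by metis
  show ?thesis
  proof (rule that, rule has_density_diagonal_set[OF assms(1) _ _ assms(3)])
    show "k \<le> M k + k" for k by simp
    show "\<bar>real (cnt (Y k) n) / real n - d k\<bar> < inverse (real (Suc k))" if "M k + k \<le> n" for k n
      using M that by simp
  qed
qed

lemma exists_dense_subset_below_upper_dd:
  assumes Y: "Y \<in> Dens" and "A \<subseteq> Y" "e > 0"
  obtains Z where "Z \<in> Dens" "A \<subseteq> Z" "Z \<subseteq> Y" "dens Z < upper_dd A + e"
proof -
  obtain F where F: "F \<in> Dens" "A \<subseteq> F" "dens F < upper_dd A + e"
    using upper_dd_approx[OF \<open>A \<subseteq> Y\<close> Y \<open>e > 0\<close>] .
  show ?thesis
  proof (cases "dens F \<le> dens Y")
    case True
    have density: "has_density (greedy_set F Y) (dens F)"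
      using greedy_set_has_density[OF has_density_dens[OF F(1)] has_density_dens[OF Y] True] .
    show ?thesis
    proof (rule that)
      show "greedy_set F Y \<in> Dens"
        by (rule DensI[OF _ density]) (use greedy_set_subset Y in \<open>auto simp: Dens_def\<close>)
      show "A \<subseteq> greedy_set F Y"
        using F(2) \<open>A \<subseteq> Y\<close> Int_subset_greedy_set by blast
      show "greedy_set F Y \<subseteq> Y"
        by (rule greedy_set_subset)
      show "dens (greedy_set F Y) < upper_dd A + e"
        using dens_eqI[OF density] F(3) by simp
    qed
  next
    case False
    then show ?thesis
      using that[of Y] Y \<open>A \<subseteq> Y\<close> F(3) by simp
  qed
qed

lemma exists_dense_chain_to_upper_dd:
  assumes "A \<subseteq> B" "B \<in> Dens"
  obtains Y where "decseq Y" "\<And>k. Y k \<in> Dens" "\<And>k. A \<subseteq> Y k" "\<And>k. Y k \<subseteq> B"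
    "(\<lambda>k. dens (Y k)) \<longlonglongrightarrow> upper_dd A"
proof -
  define u where "u = upper_dd A"
  define P where "P k Z \<longleftrightarrow> Z \<in> Dens \<and> A \<subseteq> Z \<and> Z \<subseteq> B \<and> dens Z < u + inverse (real (Suc k))"
    for k Z
  have "\<exists>Y. \<forall>k. P k (Y k) \<and> Y (Suc k) \<subseteq> Y k"
  proof (rule dependent_nat_choice)
    obtain Z where "Z \<in> Dens" "A \<subseteq> Z" "Z \<subseteq> B" "dens Z < u + 1"
      using exists_dense_subset_below_upper_dd[OF assms(2,1) zero_less_one] unfolding u_def by blast
    then show "\<exists>Z. P 0 Z"
      unfolding P_def by auto
    show "\<exists>Z. P (Suc k) Z \<and> Z \<subseteq> W" if "P k W" for k W
    proof -
      from that have W: "W \<in> Dens" "A \<subseteq> W" "W \<subseteq> B"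
        unfolding P_def by auto
      have "0 < inverse (real (Suc (Suc k)))"
        by simp
      then obtain Z where "Z \<in> Dens" "A \<subseteq> Z" "Z \<subseteq> W" "dens Z < u + inverse (real (Suc (Suc k)))"
        using exists_dense_subset_below_upper_dd[OF W(1,2)] unfolding u_def by blast
      with W(3) show ?thesis
        unfolding P_def by blast
    qed
  qed
  then obtain Y where Y: "\<And>k. Y k \<in> Dens" "\<And>k. A \<subseteq> Y k" "\<And>k. Y k \<subseteq> B"
      "\<And>k. dens (Y k) < u + inverse (real (Suc k))" and dec: "decseq Y"
    unfolding P_def decseq_Suc_iff by blast
  have "(\<lambda>k. dens (Y k)) \<longlonglongrightarrow> u"
  proof (rule tendsto_sandwich[OF _ _ tendsto_const])
    show "\<forall>\<^sub>F k in sequentially. u \<le> dens (Y k)"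
      using upper_dd_le[OF Y(2,1)] unfolding u_def by simp
    show "\<forall>\<^sub>F k in sequentially. dens (Y k) \<le> u + inverse (real (Suc k))"
      by (intro always_eventually allI less_imp_le Y(4))
    show "(\<lambda>k. u + inverse (real (Suc k))) \<longlonglongrightarrow> u"
      using tendsto_add[OF tendsto_const LIMSEQ_inverse_real_of_nat, of u] by simp
  qed
  with dec Y(1-3) show ?thesis
    using that unfolding u_def by blast
qed

lemma exists_minimal_dense_superset:
  assumes "A \<subseteq> B" "B \<in> Dens"
  obtains C where "C \<in> Dens" "A \<subseteq> C" "C \<subseteq> B" "\<And>C'. C' \<in> Dens \<Longrightarrow> A \<subseteq> C' \<Longrightarrow> dens C \<le> dens C'"
proof -
  obtain Y where dec: "decseq Y" and Y: "\<And>k. Y k \<in> Dens" "\<And>k. A \<subseteq> Y k" "\<And>k. Y k \<subseteq> B"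
    and lim: "(\<lambda>k. dens (Y k)) \<longlonglongrightarrow> upper_dd A"
    using exists_dense_chain_to_upper_dd[OF assms] by blast
  obtain N where N: "has_density (diagonal_set Y N) (upper_dd A)"
    using exists_diagonal_set_has_density[OF dec has_density_dens[OF Y(1)] lim] .
  show ?thesis
  proof (rule that)
    show "diagonal_set Y N \<subseteq> B"
      using diagonal_set_subset Y(3) by blast
    with assms(2) show "diagonal_set Y N \<in> Dens"
      using DensI[OF _ N] by (auto simp: Dens_def)
    show "A \<subseteq> diagonal_set Y N"
      using INT_subset_diagonal_set Y(2) by blast
    show "dens (diagonal_set Y N) \<le> dens C'" if "C' \<in> Dens" "A \<subseteq> C'" for C'
      using dens_eqI[OF N] upper_dd_le[OF that(2,1)] by simp
  qed
qed

lemma exists_maximal_dense_subset: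
  assumes "A \<subseteq> B" "A \<in> Dens"
  obtains C where "C \<in> Dens" "A \<subseteq> C" "C \<subseteq> B" "\<And>C'. C' \<in> Dens \<Longrightarrow> C' \<subseteq> B \<Longrightarrow> dens C' \<le> dens C"
proof -
  obtain C' where C': "C' \<in> Dens" "{1..} - B \<subseteq> C'" "C' \<subseteq> {1..} - A"
    and min: "\<And>Z. Z \<in> Dens \<Longrightarrow> {1..} - B \<subseteq> Z \<Longrightarrow> dens C' \<le> dens Z"
    using exists_minimal_dense_superset[of "{1..} - B" "{1..} - A"] assms Dens_complement by blast
  show ?thesis
  proof (rule that)
    show "{1..} - C' \<in> Dens"
      using Dens_complement[OF C'(1)] .
    show "A \<subseteq> {1..} - C'"
      using C'(3) assms(2) by (auto simp: Dens_def)
    show "{1..} - C' \<subseteq> B"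
      using C'(2) by blast
    show "dens Z \<le> dens ({1..} - C')" if "Z \<in> Dens" "Z \<subseteq> B" for Z
    proof -
      have "{1..} - B \<subseteq> {1..} - Z"
        using that(2) by blast
      then have "dens C' \<le> dens ({1..} - Z)"
        using min[OF Dens_complement[OF that(1)]] by blast
      then show ?thesis
        using dens_complement[OF that(1)] dens_complement[OF C'(1)] by linarith
    qed
  qed
qed

theorem proposition3p12:
  fixes A B :: "nat set"
  assumes "A \<subseteq> B" and "B \<subseteq> {1..}"
  shows "(B \<in> Dens \<longrightarrow> (\<exists>C\<in>Dens. dens C = upper_dd A \<and> A \<subseteq> C \<and> C \<subseteq> B))
       \<and> (A \<in> Dens \<longrightarrow> (\<exists>C\<in>Dens. dens C = lower_dd B \<and> A \<subseteq> C \<and> C \<subseteq> B))"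
proof (intro conjI impI)
  assume "B \<in> Dens"
  then obtain C where "C \<in> Dens" "A \<subseteq> C" "C \<subseteq> B" "\<And>C'. C' \<in> Dens \<Longrightarrow> A \<subseteq> C' \<Longrightarrow> dens C \<le> dens C'"
    using exists_minimal_dense_superset[OF assms(1)] by blast
  then show "\<exists>C\<in>Dens. dens C = upper_dd A \<and> A \<subseteq> C \<and> C \<subseteq> B"
    using upper_dd_eqI by metis
next
  assume "A \<in> Dens"
  then obtain C where "C \<in> Dens" "A \<subseteq> C" "C \<subseteq> B" "\<And>C'. C' \<in> Dens \<Longrightarrow> C' \<subseteq> B \<Longrightarrow> dens C' \<le> dens C"
    using exists_maximal_dense_subset[OF assms(1)] by blast
  then show "\<exists>C\<in>Dens. dens C = lower_dd B \<and> A \<subseteq> C \<and> C \<subseteq> B"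
    using lower_dd_eqI by metis
qed

end
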